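(* Let $G=\mathrm{srg}(n,k,\lambda,\mu)$ be a strongly regular graph with $\mu\ge1$. Then $\mathrm{QEC}(G)\le0$ if and only if $k-2\lambda+\mu\le4$. Moreover, $\mathrm{QEC}(G)=0$ if and only if $k-2\lambda+\mu=4$.
   Context: A graph $G=(V,E)$ is finite and simple. It is strongly regular with parameters $\mathrm{srg}(n,k,\lambda,\mu)$ if $|V|=n$, every vertex has exactly $k$ neighbours, every two adjacent vertices have exactly $\lambda$ common neighbours, and every two distinct non-adjacent vertices have exactly $\mu$ common neighbours. The hypothesis $\mu\ge1$ means in particular that there exist distinct non-adjacent vertices (so $G$ is not complete) and that $G$ is connected. For a connected graph $G=(V,E)$ with $|V|\ge2$, let $D=[d(x,y)]_{x,y\in V}$ be its distance matrix ($d$ the graph distance), and define the quadratic embedding constant \[ \mathrm{QEC}(G)=\max\{\langle f,Df\rangle : f\in\mathbb{R}^V,\ \langle f,f\rangle=1,\ \langle \mathbf{1},f\rangle=0\}, \] where $\mathbf 1$ is the all-ones vector and $\langle\cdot,\cdot\rangle$ the standard inner product. *)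

theory Defs
  imports "HOL-Analysis.Analysis"
begin

definition simple_graph :: "'a set \<Rightarrow> ('a \<Rightarrow> 'a \<Rightarrow> bool) \<Rightarrow> bool" where
  "simple_graph V E \<longleftrightarrow> finite V \<and> (\<forall>x y. E x y \<longrightarrow> x \<in> V \<and> y \<in> V)
     \<and> (\<forall>x y. E x y \<longrightarrow> E y x) \<and> (\<forall>x. \<not> E x x)"

definition srg :: "'a set \<Rightarrow> ('a \<Rightarrow> 'a \<Rightarrow> bool) \<Rightarrow> nat \<Rightarrow> nat \<Rightarrow> nat \<Rightarrow> nat \<Rightarrow> bool" where
  "srg V E n k lam mu \<longleftrightarrow> simple_graph V E \<and> card V = n
     \<and> (\<forall>x\<in>V. card {y\<in>V. E x y} = k)
     \<and> (\<forall>x\<in>V. \<forall>y\<in>V. E x y \<longrightarrow> card {z\<in>V. E x z \<and> E y z} = lam)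
     \<and> (\<forall>x\<in>V. \<forall>y\<in>V. x \<noteq> y \<and> \<not> E x y \<longrightarrow> card {z\<in>V. E x z \<and> E y z} = mu)"

definition is_walk :: "'a set \<Rightarrow> ('a \<Rightarrow> 'a \<Rightarrow> bool) \<Rightarrow> 'a list \<Rightarrow> bool" where
  "is_walk V E xs \<longleftrightarrow> xs \<noteq> [] \<and> set xs \<subseteq> V \<and> (\<forall>i. Suc i < length xs \<longrightarrow> E (xs ! i) (xs ! Suc i))"

definition gdist :: "'a set \<Rightarrow> ('a \<Rightarrow> 'a \<Rightarrow> bool) \<Rightarrow> 'a \<Rightarrow> 'a \<Rightarrow> nat" where
  "gdist V E x y = (LEAST m. \<exists>xs. is_walk V E xs \<and> hd xs = x \<and> last xs = y \<and> length xs = Suc m)"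

text \<open>Quadratic embedding constant: maximum of <f, D f> over f with <f,f> = 1, <1,f> = 0
 (for connected graphs with at least two vertices this maximum exists, so it equals the supremum).\<close>

definition QEC :: "'a set \<Rightarrow> ('a \<Rightarrow> 'a \<Rightarrow> bool) \<Rightarrow> real" where
  "QEC V E = Sup {(\<Sum>x\<in>V. \<Sum>y\<in>V. f x * real (gdist V E x y) * f y) | f :: 'a \<Rightarrow> real.
       (\<Sum>x\<in>V. (f x)\<^sup>2) = 1 \<and> (\<Sum>x\<in>V. f x) = 0}"

end

theory Submission
  imports Defs
begin

text \<open>Since \<open>\<mu> \<ge> 1\<close>, non-adjacent vertices have a common neighbour, so the distance matrix is
  \<open>D = 2(J - I) - A\<close> and \<open>\<langle>f, D f\<rangle> = -2\<langle>f, f\<rangle> - \<langle>f, A f\<rangle>\<close> for \<open>f \<perp> \<one>\<close>. On \<open>\<one>\<^sup>\<bottom>\<close> the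
  identity \<open>A\<^sup>2 = (\<lambda> - \<mu>) A + (k - \<mu>) I + \<mu> J\<close> shows that \<open>A\<close> is annihilated by
  \<open>(A - s)(A - r)\<close>, where \<open>s \<le> r\<close> are the roots of \<open>x\<^sup>2 - (\<lambda> - \<mu>) x - (k - \<mu>)\<close>; hence
  \<open>\<langle>f, A f\<rangle> \<ge> s \<langle>f, f\<rangle>\<close>, with equality for the vector \<open>(A - r)(e\<^sub>x - e\<^sub>w)\<close> built from an edge
  \<open>xw\<close>. Thus \<open>QEC = -2 - s\<close>. As \<open>r \<ge> 0\<close>, the sign of \<open>s + 2\<close> is that of
  \<open>(s + 2)(r + 2) = 4 - (k - 2\<lambda> + \<mu>)\<close>.\<close>

definition adj_op :: "'a set \<Rightarrow> ('a \<Rightarrow> 'a \<Rightarrow> bool) \<Rightarrow> ('a \<Rightarrow> real) \<Rightarrow> 'a \<Rightarrow> real" where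
  "adj_op V E f x = (\<Sum>y\<in>V. of_bool (E x y) * f y)"

lemma adj_op_diff_scaled:
  "adj_op V E (\<lambda>z. f z - c * g z) x = adj_op V E f x - c * adj_op V E g x"
  unfolding adj_op_def by (simp add: sum_subtractf sum_distrib_left algebra_simps)

lemma adj_op_divide: "adj_op V E (\<lambda>z. f z / c) x = adj_op V E f x / c"
  unfolding adj_op_def by (simp add: sum_divide_distrib)

lemma inner_adj_op_commute:
  assumes "\<And>x y. E x y \<Longrightarrow> E y x"
  shows "(\<Sum>x\<in>V. f x * adj_op V E g x) = (\<Sum>x\<in>V. adj_op V E f x * g x)"
proof -
  have "(\<Sum>x\<in>V. f x * adj_op V E g x) = (\<Sum>x\<in>V. \<Sum>y\<in>V. f x * of_bool (E x y) * g y)"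
    unfolding adj_op_def by (simp add: sum_distrib_left mult.assoc)
  also have "\<dots> = (\<Sum>y\<in>V. \<Sum>x\<in>V. f x * of_bool (E x y) * g y)"
    by (rule sum.swap)
  also have "\<dots> = (\<Sum>y\<in>V. adj_op V E f y * g y)"
  proof (rule sum.cong)
    fix y
    have "E x y = E y x" for x
      using assms by blast
    then show "(\<Sum>x\<in>V. f x * of_bool (E x y) * g y) = adj_op V E f y * g y"
      unfolding adj_op_def sum_distrib_right by (simp add: mult.commute)
  qed simp
  finally show ?thesis .
qed

lemma is_walk_length_2: "is_walk V E xs \<Longrightarrow> length xs = 2 \<Longrightarrow> E (hd xs) (last xs)"
  by (auto simp: is_walk_def numeral_2_eq_2 length_Suc_conv)

lemma gdist_self: "x \<in> V \<Longrightarrow> gdist V E x x = 0"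
  unfolding gdist_def by (rule Least_eq_0) (auto simp: is_walk_def intro!: exI[of _ "[x]"])

lemma gdist_adj:
  assumes "x \<in> V" "y \<in> V" "x \<noteq> y" "E x y"
  shows "gdist V E x y = 1"
  unfolding gdist_def
proof (rule Least_equality)
  show "\<exists>xs. is_walk V E xs \<and> hd xs = x \<and> last xs = y \<and> length xs = Suc 1"
    using assms by (intro exI[of _ "[x, y]"]) (auto simp: is_walk_def)
next
  fix m assume "\<exists>xs. is_walk V E xs \<and> hd xs = x \<and> last xs = y \<and> length xs = Suc m"
  then obtain xs where "hd xs = x" "last xs = y" "length xs = Suc m"
    by blast
  with \<open>x \<noteq> y\<close> have "m \<noteq> 0" by (auto simp: length_Suc_conv)
  then show "1 \<le> m" by simp
qed

lemma gdist_common_neighbour: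
  assumes "x \<in> V" "y \<in> V" "z \<in> V" "x \<noteq> y" "\<not> E x y" "E x z" "E z y"
  shows "gdist V E x y = 2"
  unfolding gdist_def
proof (rule Least_equality)
  show "\<exists>xs. is_walk V E xs \<and> hd xs = x \<and> last xs = y \<and> length xs = Suc 2"
    using assms
    by (intro exI[of _ "[x, z, y]"]) (auto simp: is_walk_def less_Suc_eq nth_Cons split: nat.split)
next
  fix m assume "\<exists>xs. is_walk V E xs \<and> hd xs = x \<and> last xs = y \<and> length xs = Suc m"
  then obtain xs where xs: "is_walk V E xs" "hd xs = x" "last xs = y" "length xs = Suc m"
    by blast
  have "m \<noteq> 0" using xs \<open>x \<noteq> y\<close> by (auto simp: length_Suc_conv)
  moreover have "m \<noteq> 1" using xs is_walk_length_2[of V E xs] \<open>\<not> E x y\<close> by auto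
  ultimately show "2 \<le> m" by simp
qed

lemma real_roots_nonpos_product:
  fixes L c :: real
  assumes "0 \<le> c"
  obtains s r where "s + r = L" "s * r = - c" "s \<le> r" "0 \<le> r"
proof -
  define t where "t = sqrt (L\<^sup>2 + 4 * c)"
  have t2: "t\<^sup>2 = L\<^sup>2 + 4 * c" unfolding t_def using assms by simp
  have "\<bar>L\<bar> \<le> t" unfolding t_def using assms by (intro real_le_rsqrt) simp
  with t2 show ?thesis
    by (intro that[of "(L - t) / 2" "(L + t) / 2"]) (auto simp: field_simps power2_eq_square)
qed

locale strongly_regular =
  fixes V :: "'a set" and E :: "'a \<Rightarrow> 'a \<Rightarrow> bool" and n k lam mu :: nat
  assumes srg: "srg V E n k lam mu"
begin

lemma finite_vertices: "finite V"
  and adj_vertices: "E x y \<Longrightarrow> x \<in> V \<and> y \<in> V"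
  and adj_sym: "E x y \<Longrightarrow> E y x"
  and adj_irrefl: "\<not> E x x"
  and degree: "x \<in> V \<Longrightarrow> card {y\<in>V. E x y} = k"
  and common_adj: "x \<in> V \<Longrightarrow> y \<in> V \<Longrightarrow> E x y \<Longrightarrow> card {z\<in>V. E x z \<and> E y z} = lam"
  and common_nonadj:
    "x \<in> V \<Longrightarrow> y \<in> V \<Longrightarrow> x \<noteq> y \<Longrightarrow> \<not> E x y \<Longrightarrow> card {z\<in>V. E x z \<and> E y z} = mu"
  using srg unfolding srg_def simple_graph_def by auto

lemma mu_le_degree:
  assumes "x \<in> V" "y \<in> V" "x \<noteq> y" "\<not> E x y"
  shows "mu \<le> k"
proof -
  have "card {z\<in>V. E x z \<and> E y z} \<le> card {z\<in>V. E x z}"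
    using finite_vertices by (intro card_mono) auto
  then show ?thesis using common_nonadj[OF assms] degree[OF \<open>x \<in> V\<close>] by simp
qed

lemma sum_adj_op: "(\<Sum>x\<in>V. adj_op V E f x) = real k * (\<Sum>x\<in>V. f x)"
proof -
  have "(\<Sum>x\<in>V. of_bool (E x y)) = real k" if "y \<in> V" for y
  proof -
    have "{x\<in>V. E x y} = {x\<in>V. E y x}" using adj_sym by blast
    then show ?thesis
      using degree[OF that] finite_vertices by (simp add: sum_of_bool_eq Collect_conj_eq Int_commute)
  qed
  then have "(\<Sum>y\<in>V. \<Sum>x\<in>V. of_bool (E x y) * f y) = (\<Sum>y\<in>V. real k * f y)"
    by (simp add: sum_distrib_right[symmetric])
  then show ?thesis
    unfolding adj_op_def by (subst sum.swap) (simp add: sum_distrib_left)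
qed

lemma common_neighbours_sum:
  assumes "x \<in> V" "y \<in> V"
  shows "(\<Sum>z\<in>V. of_bool (E x z) * of_bool (E z y)) =
    real mu + (real k - real mu) * of_bool (x = y) + (real lam - real mu) * of_bool (E x y)"
proof -
  have "(\<Sum>z\<in>V. of_bool (E x z) * of_bool (E z y)) = (\<Sum>z\<in>V. of_bool (E x z \<and> E y z) :: real)"
    by (intro sum.cong) (auto intro: adj_sym)
  also have "\<dots> = real (card {z\<in>V. E x z \<and> E y z})"
    using finite_vertices by (simp add: sum_of_bool_eq Collect_conj_eq Int_commute)
  finally show ?thesis
    using assms adj_irrefl degree common_adj common_nonadj by (cases "x = y"; cases "E x y") auto
qed

lemma adj_op_adj_op:
  assumes f0: "(\<Sum>y\<in>V. f y) = 0" and "x \<in> V"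
  shows "adj_op V E (adj_op V E f) x =
    (real lam - real mu) * adj_op V E f x + (real k - real mu) * f x"
proof -
  have "adj_op V E (adj_op V E f) x = (\<Sum>z\<in>V. \<Sum>y\<in>V. of_bool (E x z) * of_bool (E z y) * f y)"
    unfolding adj_op_def by (simp add: sum_distrib_left mult.assoc)
  also have "\<dots> = (\<Sum>y\<in>V. (\<Sum>z\<in>V. of_bool (E x z) * of_bool (E z y)) * f y)"
    by (subst sum.swap) (simp add: sum_distrib_right)
  also have "\<dots> = (\<Sum>y\<in>V. real mu * f y + (real k - real mu) * (of_bool (x = y) * f y)
      + (real lam - real mu) * (of_bool (E x y) * f y))"
  proof (rule sum.cong)
    fix y assume "y \<in> V"
    show "(\<Sum>z\<in>V. of_bool (E x z) * of_bool (E z y)) * f y = real mu * f y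
        + (real k - real mu) * (of_bool (x = y) * f y) + (real lam - real mu) * (of_bool (E x y) * f y)"
      unfolding common_neighbours_sum[OF \<open>x \<in> V\<close> \<open>y \<in> V\<close>] by (simp add: algebra_simps)
  qed simp
  also have "\<dots> = (real lam - real mu) * adj_op V E f x + (real k - real mu) * f x"
  proof -
    have "(\<Sum>y\<in>V. of_bool (x = y) * f y) = f x"
      using \<open>x \<in> V\<close> finite_vertices by (simp add: if_distrib sum.delta cong: if_cong)
    with f0 show ?thesis
      by (simp add: sum.distrib sum_distrib_left[symmetric] adj_op_def)
  qed
  finally show ?thesis .
qed

lemma norm_adj_op:
  assumes "(\<Sum>y\<in>V. f y) = 0"
  shows "(\<Sum>x\<in>V. (adj_op V E f x)\<^sup>2) =
    (real lam - real mu) * (\<Sum>x\<in>V. f x * adj_op V E f x) + (real k - real mu) * (\<Sum>x\<in>V. (f x)\<^sup>2)"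
proof -
  have "(\<Sum>x\<in>V. (adj_op V E f x)\<^sup>2) = (\<Sum>x\<in>V. f x * adj_op V E (adj_op V E f) x)"
    using inner_adj_op_commute[where f = f and g = "adj_op V E f", OF adj_sym]
    by (simp add: power2_eq_square)
  also have "\<dots> = (\<Sum>x\<in>V. (real lam - real mu) * (f x * adj_op V E f x) + (real k - real mu) * (f x)\<^sup>2)"
    by (intro sum.cong refl) (simp add: adj_op_adj_op assms algebra_simps power2_eq_square)
  finally show ?thesis by (simp add: sum.distrib sum_distrib_left)
qed

text \<open>\<open>\<parallel>A f - s f\<parallel>\<^sup>2 = (r - s)(\<langle>f, A f\<rangle> - s \<langle>f, f\<rangle>)\<close>; if \<open>r = s\<close> it forces \<open>A f = s f\<close>.\<close>

lemma inner_adj_op_ge: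
  assumes f0: "(\<Sum>x\<in>V. f x) = 0"
    and roots: "s + r = real lam - real mu" "s * r = real mu - real k" and "s \<le> r"
  shows "s * (\<Sum>x\<in>V. (f x)\<^sup>2) \<le> (\<Sum>x\<in>V. f x * adj_op V E f x)"
proof -
  define Q where "Q = (\<Sum>x\<in>V. f x * adj_op V E f x)"
  define N where "N = (\<Sum>x\<in>V. (f x)\<^sup>2)"
  have "(\<Sum>x\<in>V. (adj_op V E f x - s * f x)\<^sup>2) =
      (\<Sum>x\<in>V. (adj_op V E f x)\<^sup>2) - 2 * s * Q + s\<^sup>2 * N"
    unfolding Q_def N_def power2_diff
    by (simp add: sum.distrib sum_subtractf sum_distrib_left power_mult_distrib algebra_simps)
  also have "\<dots> = (r - s) * (Q - s * N)"
  proof -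
    have k_eq: "real k = real mu - s * r" using roots(2) by simp
    show ?thesis
      unfolding norm_adj_op[OF f0] Q_def[symmetric] N_def[symmetric] roots(1)[symmetric] k_eq
      by (simp add: power2_eq_square algebra_simps)
  qed
  finally have sq: "(\<Sum>x\<in>V. (adj_op V E f x - s * f x)\<^sup>2) = (r - s) * (Q - s * N)" .
  show ?thesis
  proof (cases "s = r")
    case True
    then have "\<forall>x\<in>V. (adj_op V E f x - s * f x)\<^sup>2 = 0"
      using sq finite_vertices by (subst sum_nonneg_eq_0_iff[symmetric]) auto
    then have "Q = s * N"
      unfolding Q_def N_def by (simp add: sum_distrib_left power2_eq_square mult.left_commute)
    then show ?thesis unfolding Q_def N_def by simp
  next
    case False
    with \<open>s \<le> r\<close> have "0 < r - s" by simp
    moreover have "0 \<le> (r - s) * (Q - s * N)"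
      unfolding sq[symmetric] by (simp add: sum_nonneg)
    ultimately show ?thesis unfolding Q_def N_def by (simp add: zero_le_mult_iff)
  qed
qed

text \<open>The eigenvector is \<open>(A - r)(e\<^sub>x - e\<^sub>w)\<close>; its entry at \<open>x\<close> is \<open>-1 - r\<close>.\<close>

lemma adj_op_eigenvector:
  assumes "E x w"
    and roots: "s + r = real lam - real mu" "s * r = real mu - real k" and "r \<noteq> -1"
  obtains h where "(\<Sum>z\<in>V. h z) = 0" "\<And>z. z \<in> V \<Longrightarrow> adj_op V E h z = s * h z" "h x \<noteq> 0"
proof -
  have x: "x \<in> V" and w: "w \<in> V" using adj_vertices[OF \<open>E x w\<close>] by auto
  have "x \<noteq> w" using \<open>E x w\<close> adj_irrefl by auto
  define f where "f z = of_bool (z = x) - (of_bool (z = w) :: real)" for z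
  define h where "h z = adj_op V E f z - r * f z" for z
  have f0: "(\<Sum>z\<in>V. f z) = 0"
    unfolding f_def using finite_vertices x w by (simp add: sum_subtractf)
  have Af: "adj_op V E f z = of_bool (E z x) - of_bool (E z w)" for z
  proof -
    have "of_bool (E z y) * f y =
        (if y = x then of_bool (E z y) else 0) - (if y = w then of_bool (E z y) else 0)" for y
      using \<open>x \<noteq> w\<close> by (simp add: f_def)
    then show ?thesis
      unfolding adj_op_def using finite_vertices x w by (simp add: sum_subtractf sum.delta')
  qed
  show ?thesis
  proof (rule that)
    show "(\<Sum>z\<in>V. h z) = 0"
      unfolding h_def using f0 sum_adj_op[of f] by (simp add: sum_subtractf sum_distrib_left[symmetric])
    show "adj_op V E h z = s * h z" if "z \<in> V" for z
    proof -
      have k_eq: "real k = real mu - s * r" using roots(2) by simp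
      show ?thesis
        unfolding h_def adj_op_diff_scaled adj_op_adj_op[OF f0 that] roots(1)[symmetric] k_eq
        by (simp add: algebra_simps)
    qed
    show "h x \<noteq> 0"
      unfolding h_def Af using \<open>E x w\<close> \<open>x \<noteq> w\<close> adj_irrefl \<open>r \<noteq> -1\<close> by (simp add: f_def)
  qed
qed

end

locale connected_srg = strongly_regular +
  assumes mu_pos: "1 \<le> mu"
begin

lemma common_neighbour_exists:
  assumes "x \<in> V" "y \<in> V" "x \<noteq> y" "\<not> E x y"
  obtains z where "z \<in> V" "E x z" "E z y"
proof -
  have "{z\<in>V. E x z \<and> E y z} \<noteq> {}"
    using common_nonadj[OF assms] mu_pos by (metis card.empty not_one_le_zero)
  then show ?thesis using that adj_sym by blast
qed

lemma gdist_eq: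
  assumes "x \<in> V" "y \<in> V"
  shows "real (gdist V E x y) = 2 - 2 * of_bool (x = y) - of_bool (E x y)"
proof (cases "x = y")
  case True
  then show ?thesis using gdist_self[OF \<open>x \<in> V\<close>] adj_irrefl by simp
next
  case False
  show ?thesis
  proof (cases "E x y")
    case True
    then show ?thesis using gdist_adj[OF assms False] False by simp
  next
    case nonadj: False
    obtain z where z: "z \<in> V" "E x z" "E z y"
      using common_neighbour_exists[OF assms False nonadj] .
    show ?thesis using gdist_common_neighbour[OF assms z(1) False nonadj z(2,3)] False nonadj by simp
  qed
qed

lemma distance_form:
  assumes f0: "(\<Sum>y\<in>V. f y) = 0"
  shows "(\<Sum>x\<in>V. \<Sum>y\<in>V. f x * real (gdist V E x y) * f y) =
    -2 * (\<Sum>x\<in>V. (f x)\<^sup>2) - (\<Sum>x\<in>V. f x * adj_op V E f x)"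
proof -
  have "(\<Sum>y\<in>V. f x * real (gdist V E x y) * f y) = -2 * (f x)\<^sup>2 - f x * adj_op V E f x"
    if "x \<in> V" for x
  proof -
    have "(\<Sum>y\<in>V. f x * real (gdist V E x y) * f y) = 2 * f x * (\<Sum>y\<in>V. f y)
        - 2 * f x * (\<Sum>y\<in>V. if y = x then f y else 0) - f x * adj_op V E f x"
      unfolding adj_op_def sum_distrib_left sum_subtractf[symmetric]
      by (intro sum.cong refl) (auto simp: gdist_eq \<open>x \<in> V\<close> algebra_simps)
    then show ?thesis
      using f0 finite_vertices \<open>x \<in> V\<close> by (simp add: sum.delta' power2_eq_square)
  qed
  then show ?thesis
    by (simp add: sum_subtractf sum_distrib_left)
qed

lemma QEC_eq_smaller_root:
  assumes "E x w"
    and roots: "s + r = real lam - real mu" "s * r = real mu - real k" "s \<le> r" "0 \<le> r"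
  shows "QEC V E = -2 - s"
  unfolding QEC_def
proof (rule cSup_eq_maximum)
  obtain h where h0: "(\<Sum>z\<in>V. h z) = 0" and Ah: "\<And>z. z \<in> V \<Longrightarrow> adj_op V E h z = s * h z"
    and "h x \<noteq> 0"
    using adj_op_eigenvector[OF \<open>E x w\<close> roots(1,2)] \<open>0 \<le> r\<close> by auto
  define N where "N = (\<Sum>z\<in>V. (h z)\<^sup>2)"
  have "0 < N"
    unfolding N_def using adj_vertices[OF \<open>E x w\<close>] finite_vertices \<open>h x \<noteq> 0\<close>
    by (intro sum_pos2[of _ x]) auto
  define g where "g z = h z / sqrt N" for z
  have g0: "(\<Sum>z\<in>V. g z) = 0" unfolding g_def using h0 by (simp add: sum_divide_distrib[symmetric])
  have g1: "(\<Sum>z\<in>V. (g z)\<^sup>2) = 1"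
    unfolding g_def using \<open>0 < N\<close> by (simp add: power_divide sum_divide_distrib[symmetric] N_def)
  have "(\<Sum>z\<in>V. g z * adj_op V E g z) = (\<Sum>z\<in>V. s * (g z)\<^sup>2)"
    unfolding g_def adj_op_divide by (intro sum.cong refl) (simp add: Ah power2_eq_square)
  with g1 have "(\<Sum>z\<in>V. g z * adj_op V E g z) = s" by (simp add: sum_distrib_left[symmetric])
  with g0 g1 show "-2 - s \<in> {(\<Sum>x\<in>V. \<Sum>y\<in>V. f x * real (gdist V E x y) * f y) | f.
      (\<Sum>x\<in>V. (f x)\<^sup>2) = 1 \<and> (\<Sum>x\<in>V. f x) = 0}"
    using distance_form[OF g0] by force
next
  fix v assume "v \<in> {(\<Sum>x\<in>V. \<Sum>y\<in>V. f x * real (gdist V E x y) * f y) | f.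
      (\<Sum>x\<in>V. (f x)\<^sup>2) = 1 \<and> (\<Sum>x\<in>V. f x) = 0}"
  then obtain f where f1: "(\<Sum>x\<in>V. (f x)\<^sup>2) = 1" and f0: "(\<Sum>x\<in>V. f x) = 0"
    and v: "v = (\<Sum>x\<in>V. \<Sum>y\<in>V. f x * real (gdist V E x y) * f y)"
    by blast
  show "v \<le> -2 - s"
    using inner_adj_op_ge[OF f0 roots(1-3)] f1 unfolding v distance_form[OF f0] by simp
qed

end

theorem theorem1p2:
  fixes V :: "'a set" and E :: "'a \<Rightarrow> 'a \<Rightarrow> bool" and n k lam mu :: nat
  assumes "srg V E n k lam mu"
    and "mu \<ge> 1"
    and "\<exists>x\<in>V. \<exists>y\<in>V. x \<noteq> y \<and> \<not> E x y"
  shows "(QEC V E \<le> 0 \<longleftrightarrow> int k - 2 * int lam + int mu \<le> 4)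
       \<and> (QEC V E = 0 \<longleftrightarrow> int k - 2 * int lam + int mu = 4)"
proof -
  interpret connected_srg V E n k lam mu
    using assms(1,2) by unfold_locales
  obtain x y where xy: "x \<in> V" "y \<in> V" "x \<noteq> y" "\<not> E x y"
    using assms(3) by blast
  obtain z where "z \<in> V" "E x z" "E z y"
    using common_neighbour_exists[OF xy] .
  obtain s r where roots: "s + r = real lam - real mu" "s * r = real mu - real k" "s \<le> r" "0 \<le> r"
    using real_roots_nonpos_product[of "real k - real mu"] mu_le_degree[OF xy] by auto
  have "QEC V E = -2 - s"
    using QEC_eq_smaller_root[OF \<open>E x z\<close> roots] .
  moreover have "(s + 2) * (r + 2) = 4 - (real k - 2 * real lam + real mu)"
    using roots(1,2) by (simp add: algebra_simps)
  moreover have "0 < r + 2" using \<open>0 \<le> r\<close> by simp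
  ultimately have "(QEC V E \<le> 0 \<longleftrightarrow> real k - 2 * real lam + real mu \<le> 4)
      \<and> (QEC V E = 0 \<longleftrightarrow> real k - 2 * real lam + real mu = 4)"
    by (smt (verit) zero_le_mult_iff mult_eq_0_iff)
  then show ?thesis by linarith
qed

end
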